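(* In the standing setup below, every $\phi\in\mathrm{Dr}_1(\mathbf{A}_{\mathcal H},L)$ is $\overline L$-isomorphic to some $\psi\in\mathrm{Dr}_1(\mathbf{A}_{\mathcal H},L)$ with $\psi_{\overline Y}=\tau_L$.
   Context: Standing setup: $\mathbb{F}_q$ is the finite field with $q$ elements. Let $d\ge5$ be odd, $m$ a positive divisor of $d$, $p\in\mathbb{F}_q[X]$ monic irreducible of degree $d/m$, $f=\alpha p^m$ with $\alpha\in\mathbb{F}_q^\times$, and $h\in\mathbb{F}_q[X]$ nonzero of degree $\le(d-1)/2$ and not divisible by $p$. Let $\xi=Y^2+h(X)Y-f(X)$ and assume the affine plane curve $\mathcal H:\xi=0$ is nonsingular. Let $\mathbf{A}_{\mathcal H}=\mathbb{F}_q[X][Y]/(\xi)$, $\mathfrak{p}=\langle p(\overline X),\overline Y\rangle$, $L$ a degree-$m$ extension of $\mathbf{A}_{\mathcal H}/\mathfrak{p}$ (so $[L:\mathbb{F}_q]=d$), $\gamma:\mathbf{A}_{\mathcal H}\to\mathbf{A}_{\mathcal H}/\mathfrak{p}\hookrightarrow L$. $L\{\tau\}$ is the Ore polynomial ring with $\tau a=a^q\tau$; $\tau_L=\tau^d$. A Drinfeld $\mathbf{A}_{\mathcal H}$-module over $L$ is an $\mathbb{F}_q$-algebra morphism $\phi:\mathbf{A}_{\mathcal H}\to L\{\tau\}$ with constant coefficient of $\phi_a$ equal to $\gamma(a)$ and some $\phi_a$ nonconstant; rank $1$ means $\deg_\tau\phi_a=\log_q\#(\mathbf{A}_{\mathcal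 H}/a\mathbf{A}_{\mathcal H})$ for all $a\ne0$; $\mathrm{Dr}_1(\mathbf{A}_{\mathcal H},L)$ is the set of these. $\phi,\psi$ are $\overline L$-isomorphic if $\lambda\phi_a\lambda^{-1}=\psi_a$ for all $a$, for some $\lambda\in\overline L^\times$. *)

theory Defs
  imports "HOL-Algebra.Algebraic_Closure_Type"
begin

text \<open>Elements of A_H = F_q[X][Y]/(Y^2 + h Y - f) are represented uniquely as
  pairs (a0, a1) standing for a0 + a1 * Ybar (xi is monic of degree 2 in Y).\<close>

definition hadd :: "'a::comm_ring_1 poly \<times> 'a poly \<Rightarrow> 'a poly \<times> 'a poly \<Rightarrow> 'a poly \<times> 'a poly" where
  "hadd a b = (fst a + fst b, snd a + snd b)"

definition hsub :: "'a::comm_ring_1 poly \<times> 'a poly \<Rightarrow> 'a poly \<times> 'a poly \<Rightarrow> 'a poly \<times> 'a poly" where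
  "hsub a b = (fst a - fst b, snd a - snd b)"

text \<open>Multiplication using Ybar^2 = f - h * Ybar.\<close>
definition hmul :: "'a::comm_ring_1 poly \<Rightarrow> 'a poly \<Rightarrow>
    'a poly \<times> 'a poly \<Rightarrow> 'a poly \<times> 'a poly \<Rightarrow> 'a poly \<times> 'a poly" where
  "hmul h f a b = (fst a * fst b + snd a * snd b * f,
                   fst a * snd b + snd a * fst b - snd a * snd b * h)"

definition hone :: "'a::comm_ring_1 poly \<times> 'a poly" where
  "hone = (1, 0)"

definition Ybar :: "'a::comm_ring_1 poly \<times> 'a poly" where
  "Ybar = (0, 1)"

definition quot_card :: "'a::comm_ring_1 poly \<Rightarrow> 'a poly \<Rightarrow> 'a poly \<times> 'a poly \<Rightarrow> nat" where
  "quot_card h f a = card (UNIV // {(x, y). \<exists>c. hsub x y = hmul h f a c})"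

text \<open>Ore polynomials K{tau} with tau c = c^q tau, represented by coefficient
  polynomials; multiplication (sum a_i tau^i)(sum b_j tau^j) = sum a_i b_j^(q^i) tau^(i+j).\<close>
definition ore_mult :: "nat \<Rightarrow> 'k::comm_ring_1 poly \<Rightarrow> 'k poly \<Rightarrow> 'k poly" where
  "ore_mult q P Q = (\<Sum>i\<le>degree P. monom (coeff P i) i * map_poly (\<lambda>b. b ^ (q ^ i)) Q)"

text \<open>gamma : A_H -> A_H/p -> L, where the embedding F_q[X]/(p) -> L sends Xbar to theta.\<close>
definition gamma_map :: "('a::field \<Rightarrow> 'l::field) \<Rightarrow> 'l \<Rightarrow> 'a poly \<times> 'a poly \<Rightarrow> 'l" where
  "gamma_map \<iota> \<theta> a = poly (map_poly \<iota> (fst a)) \<theta>"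

definition is_drinfeld_rank1 ::
  "'a::{finite,field} poly \<Rightarrow> 'a poly \<Rightarrow> ('a \<Rightarrow> 'l::field) \<Rightarrow> 'l \<Rightarrow>
   ('a poly \<times> 'a poly \<Rightarrow> 'l poly) \<Rightarrow> bool" where
  "is_drinfeld_rank1 h f \<iota> \<theta> \<phi> \<longleftrightarrow>
     (\<forall>a b. \<phi> (hadd a b) = \<phi> a + \<phi> b) \<and>
     (\<forall>a b. \<phi> (hmul h f a b) = ore_mult (card (UNIV :: 'a set)) (\<phi> a) (\<phi> b)) \<and>
     \<phi> hone = 1 \<and>
     (\<forall>c. \<phi> ([:c:], 0) = [:\<iota> c:]) \<and>
     (\<forall>a. coeff (\<phi> a) 0 = gamma_map \<iota> \<theta> a) \<and>
     (\<exists>a. degree (\<phi> a) > 0) \<and>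
     (\<forall>a. a \<noteq> (0, 0) \<longrightarrow> (card (UNIV :: 'a set)) ^ degree (\<phi> a) = quot_card h f a)"

definition Lbar_isomorphic ::
  "nat \<Rightarrow> ('b \<Rightarrow> 'l::field poly) \<Rightarrow> ('b \<Rightarrow> 'l poly) \<Rightarrow> bool" where
  "Lbar_isomorphic q \<phi> \<psi> \<longleftrightarrow>
     (\<exists>lam::'l alg_closure. lam \<noteq> 0 \<and>
        (\<forall>a. ore_mult q (ore_mult q [:lam:] (map_poly to_ac (\<phi> a))) [:inverse lam:]
             = map_poly to_ac (\<psi> a)))"

definition nonsingular_curve :: "'a::field poly \<Rightarrow> 'a poly \<Rightarrow> bool" where
  "nonsingular_curve h f \<longleftrightarrow>
     (\<forall>x y :: 'a alg_closure.
        let h' = map_poly to_ac h; f' = map_poly to_ac f in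
        \<not> (y ^ 2 + poly h' x * y - poly f' x = 0 \<and>
           poly (pderiv h') x * y - poly (pderiv f') x = 0 \<and>
           2 * y + poly h' x = 0))"

end

theory Submission
  imports Defs "HOL-Library.Cardinality"
begin

text \<open>
  On F_q[X] the constant-term map gamma of phi is a ring homomorphism with kernel (p). Since phi_p
  commutes with every phi_g, a nonzero tau^k-coefficient of phi_p with k < deg p would force all of
  gamma(F_q[X]), a field with q^(deg p) elements, to be fixed by x -> x^(q^k); so phi_p only has
  terms of degree at least deg p, and phi_f = phi_Y phi_(Y+h) only terms of degree at least d.
  The constant term gamma(h) of phi_(Y+h) is nonzero and deg phi_Y = d by the rank condition,
  hence phi_Y = b tau^d. For u in the algebraic closure with u^(q^d - 1) = b, conjugation by u
  turns phi_Y into tau^d. Commuting with b tau^d gives c b^(q^k) = b c for every coefficient c of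
  tau^k in any phi_a, and this is exactly what makes the conjugated coefficient u c u^(-q^k)
  invariant under x -> x^(q^d), i.e. an element of L.
\<close>

section \<open>Ore polynomials\<close>

lemma coeff_ore_mult:
  assumes "q > 0"
  shows "coeff (ore_mult q P R) n = (\<Sum>i\<le>n. coeff P i * coeff R (n - i) ^ q ^ i)"
proof -
  define g where "g i = (if i \<le> n then coeff P i * coeff R (n - i) ^ q ^ i else 0)" for i
  have "coeff (ore_mult q P R) n = (\<Sum>i\<le>degree P. g i)"
    unfolding ore_mult_def g_def coeff_sum coeff_monom_mult
    by (rule sum.cong) (use assms in \<open>auto simp: coeff_map_poly zero_power\<close>)
  also have "\<dots> = (\<Sum>i\<le>degree P + n. g i)"
    by (rule sum.mono_neutral_left) (auto simp: g_def coeff_eq_0)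
  also have "\<dots> = (\<Sum>i\<le>n. g i)"
    by (rule sum.mono_neutral_right) (auto simp: g_def)
  finally show ?thesis by (simp add: g_def)
qed

lemma coeff_ore_mult_0:
  assumes "q > 0"
  shows "coeff (ore_mult q P R) 0 = coeff P 0 * coeff R 0"
  using assms by (simp add: coeff_ore_mult)

lemma coeff_ore_mult_monom_left:
  assumes "q > 0"
  shows "coeff (ore_mult q (monom c j) R) n = (if j \<le> n then c * coeff R (n - j) ^ q ^ j else 0)"
proof -
  have "coeff (ore_mult q (monom c j) R) n
      = (\<Sum>i\<le>n. if i = j then c * coeff R (n - j) ^ q ^ j else 0)"
    unfolding coeff_ore_mult[OF assms] coeff_monom by (rule sum.cong) auto
  then show ?thesis by simp
qed

lemma coeff_ore_mult_monom_right:
  assumes "q > 0"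
  shows "coeff (ore_mult q P (monom c j)) n = (if j \<le> n then coeff P (n - j) * c ^ q ^ (n - j) else 0)"
proof -
  have "coeff (ore_mult q P (monom c j)) n
      = (\<Sum>i\<le>n. if i = n - j then (if j \<le> n then coeff P (n - j) * c ^ q ^ (n - j) else 0) else 0)"
    unfolding coeff_ore_mult[OF assms] coeff_monom
    by (rule sum.cong) (use assms in \<open>auto simp: zero_power\<close>)
  then show ?thesis by simp
qed

lemma coeff_ore_mult_eq_0_below:
  assumes "q > 0" "\<forall>i<a. coeff P i = 0" "\<forall>j<b. coeff R j = 0" "n < a + b"
  shows "coeff (ore_mult q P R) n = 0"
  unfolding coeff_ore_mult[OF assms(1)]
proof (rule sum.neutral, intro ballI)
  fix i assume "i \<in> {..n}"
  then have "i < a \<or> n - i < b" using assms(4) by auto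
  then show "coeff P i * coeff R (n - i) ^ q ^ i = 0"
    using assms(1-3) by (auto simp: zero_power)
qed

lemma coeff_ore_mult_lowest_left:
  assumes "q > 0" "\<forall>i<k. coeff P i = 0"
  shows "coeff (ore_mult q P R) k = coeff P k * coeff R 0 ^ q ^ k"
proof -
  have "coeff (ore_mult q P R) k = (\<Sum>i\<le>k. if i = k then coeff P k * coeff R 0 ^ q ^ k else 0)"
    unfolding coeff_ore_mult[OF assms(1)] by (rule sum.cong) (use assms(2) in auto)
  then show ?thesis by simp
qed

lemma coeff_ore_mult_lowest_right:
  assumes "q > 0" "\<forall>j<k. coeff R j = 0"
  shows "coeff (ore_mult q P R) k = coeff P 0 * coeff R k"
proof -
  have "coeff (ore_mult q P R) k = (\<Sum>i\<le>k. if i = 0 then coeff P 0 * coeff R k else 0)"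
    unfolding coeff_ore_mult[OF assms(1)]
    by (rule sum.cong) (use assms in \<open>auto simp: zero_power\<close>)
  then show ?thesis by simp
qed

lemma ore_commute_lowest_coeff:
  assumes "q > 0" "\<forall>i<k. coeff P i = 0" "coeff P k \<noteq> 0"
    and "ore_mult q C P = ore_mult q P C"
  shows "coeff C 0 ^ q ^ k = (coeff C 0 :: 'k::idom)"
proof -
  have "coeff C 0 * coeff P k = coeff P k * coeff C 0 ^ q ^ k"
    using arg_cong[OF assms(4), of "\<lambda>R. coeff R k"]
    unfolding coeff_ore_mult_lowest_right[OF assms(1,2)] coeff_ore_mult_lowest_left[OF assms(1,2)] .
  then show ?thesis using assms(3) by (simp add: mult.commute)
qed

lemma ore_commute_monom_coeff:
  assumes "q > 0" "ore_mult q P (monom b d) = ore_mult q (monom b d) P"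
  shows "coeff P k * b ^ q ^ k = b * coeff P k ^ q ^ d"
  using arg_cong[OF assms(2), of "\<lambda>R. coeff R (k + d)"]
  by (simp add: coeff_ore_mult_monom_left coeff_ore_mult_monom_right assms(1))

lemma map_poly_to_ac_ore_mult:
  assumes "q > 0"
  shows "map_poly to_ac (ore_mult q P R) = ore_mult q (map_poly to_ac P) (map_poly to_ac R)"
  by (rule poly_eqI) (simp add: coeff_ore_mult[OF assms] coeff_map_poly to_ac_sum)

definition ore_conj :: "nat \<Rightarrow> 'k::field \<Rightarrow> 'k poly \<Rightarrow> 'k poly" where
  "ore_conj q u P = ore_mult q (ore_mult q [:u:] P) [:inverse u:]"

lemma coeff_ore_conj:
  assumes "q > 0"
  shows "coeff (ore_conj q u P) k = u * coeff P k * inverse u ^ q ^ k"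
  using assms unfolding ore_conj_def monom_0[symmetric]
  by (simp add: coeff_ore_mult_monom_left coeff_ore_mult_monom_right)

lemma ore_conj_add:
  assumes "q > 0"
  shows "ore_conj q u (P + R) = ore_conj q u P + ore_conj q u R"
  by (rule poly_eqI) (simp add: coeff_ore_conj[OF assms] algebra_simps)

lemma ore_conj_ore_mult:
  assumes "q > 0" "u \<noteq> 0"
  shows "ore_conj q u (ore_mult q P R) = ore_mult q (ore_conj q u P) (ore_conj q u R)"
proof (rule poly_eqI)
  fix k
  define v where "v = inverse u"
  have term_eq: "u * (coeff P i * coeff R (k - i) ^ q ^ i) * v ^ q ^ k
      = u * coeff P i * v ^ q ^ i * (u * coeff R (k - i) * v ^ q ^ (k - i)) ^ q ^ i"
    if "i \<le> k" for i
  proof -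
    have "(u * coeff R (k - i) * v ^ q ^ (k - i)) ^ q ^ i
        = u ^ q ^ i * coeff R (k - i) ^ q ^ i * v ^ (q ^ (k - i) * q ^ i)"
      by (simp add: power_mult_distrib power_mult)
    also have "q ^ (k - i) * q ^ i = q ^ k"
      using that by (simp flip: power_add)
    finally have "u * coeff P i * v ^ q ^ i * (u * coeff R (k - i) * v ^ q ^ (k - i)) ^ q ^ i
        = (v ^ q ^ i * u ^ q ^ i) * (u * (coeff P i * coeff R (k - i) ^ q ^ i) * v ^ q ^ k)"
      by (simp only: mult_ac)
    also have "v ^ q ^ i * u ^ q ^ i = 1"
      using assms(2) by (simp add: v_def flip: power_mult_distrib)
    finally show ?thesis by (metis mult_1_left)
  qed
  show "coeff (ore_conj q u (ore_mult q P R)) k = coeff (ore_mult q (ore_conj q u P) (ore_conj q u R)) k"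
    unfolding coeff_ore_conj[OF assms(1)] coeff_ore_mult[OF assms(1)] v_def[symmetric]
      sum_distrib_left sum_distrib_right
    by (rule sum.cong) (simp_all add: term_eq)
qed

lemma ore_conj_const:
  assumes "q > 0" "u \<noteq> 0"
  shows "ore_conj q u [:c:] = [:c:]"
proof (rule poly_eqI)
  fix k show "coeff (ore_conj q u [:c:]) k = coeff [:c:] k"
    using assms by (cases k) (simp_all add: coeff_ore_conj)
qed

lemma ore_conj_1:
  assumes "q > 0" "u \<noteq> 0"
  shows "ore_conj q u 1 = 1"
  using ore_conj_const[OF assms, of 1] by (simp only: one_pCons)

lemma coeff_ore_conj_0:
  assumes "q > 0" "u \<noteq> 0"
  shows "coeff (ore_conj q u P) 0 = coeff P 0"
  using assms(2) by (simp add: coeff_ore_conj[OF assms(1)])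

lemma degree_ore_conj:
  assumes "q > 0" "u \<noteq> 0"
  shows "degree (ore_conj q u P) = degree P"
proof -
  have zero_iff: "coeff (ore_conj q u P) k = 0 \<longleftrightarrow> coeff P k = 0" for k
    using assms(2) by (simp add: coeff_ore_conj[OF assms(1)])
  show ?thesis
  proof (rule antisym)
    show "degree (ore_conj q u P) \<le> degree P"
      by (rule degree_le) (simp add: zero_iff coeff_eq_0)
    show "degree P \<le> degree (ore_conj q u P)"
      by (rule degree_le) (simp add: coeff_eq_0 flip: zero_iff)
  qed
qed

section \<open>Finite fields and polynomials over them\<close>

text \<open>The library's finite_field_power_card_eq_same needs the class finite_field, to which a type
  of sort finite and field need not belong; we use Lagrange in the unit group instead.\<close>

lemma power_card_UNIV_eq_self:
  fixes x :: "'a::{finite,field}"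
  shows "x ^ CARD('a) = x"
proof -
  obtain n where n: "CARD('a) = Suc n"
    using finite_UNIV_card_ge_0[OF finite_class.finite_UNIV] gr0_implies_Suc by blast
  show ?thesis
  proof (cases "x = 0")
    case False
    define R where "R = (ring_of_type_algebra :: 'a ring)"
    interpret field R unfolding R_def ..
    have units: "Units R = UNIV - {0}"
      unfolding field_Units by (simp add: R_def ring_of_type_algebra_def)
    have pow: "x [^]\<^bsub>R\<^esub> k = x ^ k" for k :: nat
      by (induction k) (simp_all add: R_def ring_of_type_algebra_def)
    have "x [^]\<^bsub>R\<^esub> card (Units R) = \<one>\<^bsub>R\<^esub>"
      by (rule units_power_order_eq_one) (simp_all add: units False)
    then have "x ^ card (UNIV - {0 :: 'a}) = 1"
      unfolding pow units by (simp add: R_def ring_of_type_algebra_def)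
    moreover have "card (UNIV - {0 :: 'a}) = n"
      using n by (simp add: card_Diff_singleton)
    ultimately show ?thesis
      using n by simp
  qed (simp add: n)
qed

lemma card_UNIV_field_ge_2: "CARD('a::{finite,field}) \<ge> 2"
proof -
  have "card {0::'a, 1} \<le> CARD('a)" by (rule card_mono) auto
  then show ?thesis by simp
qed

lemma power_fixed_points_eq_roots:
  "{x :: 'k::comm_ring_1. x ^ N = x} = {x. poly (monom 1 N - [:0, 1:]) x = 0}"
  by (auto simp: poly_monom)

lemma power_fixed_points_poly_nonzero:
  assumes "N \<ge> 2"
  shows "monom (1 :: 'k::comm_ring_1) N - [:0, 1:] \<noteq> 0"
proof -
  obtain k where "N = Suc (Suc k)"
    using assms by (metis add_2_eq_Suc le_Suc_ex)
  then have "coeff (monom (1 :: 'k) N - [:0, 1:]) N = 1"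
    by simp
  then show ?thesis by (metis coeff_0 zero_neq_one)
qed

lemma finite_power_fixed_points:
  assumes "N \<ge> 2"
  shows "finite {x :: 'k::idom. x ^ N = x}"
  unfolding power_fixed_points_eq_roots
  by (rule poly_roots_finite[OF power_fixed_points_poly_nonzero[OF assms]])

lemma card_power_fixed_points_le:
  assumes "N \<ge> 2"
  shows "card {x :: 'k::idom. x ^ N = x} \<le> N"
proof -
  have "degree (monom (1 :: 'k) N - [:0, 1:]) \<le> N"
    using assms by (intro order.trans[OF degree_diff_le_max]) (auto simp: degree_monom_le)
  then show ?thesis
    unfolding power_fixed_points_eq_roots
    by (rule order.trans[OF card_poly_roots_bound[OF power_fixed_points_poly_nonzero[OF assms]]])
qed

lemma range_to_ac_eq_power_fixed_points:
  "range (to_ac :: 'l::{finite,field} \<Rightarrow> 'l alg_closure)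
     = {x. x ^ CARD('l) = x}"
proof (rule card_subset_eq)
  let ?Q = "CARD('l)"
  show fin: "finite {x :: 'l alg_closure. x ^ ?Q = x}"
    by (rule finite_power_fixed_points[OF card_UNIV_field_ge_2])
  show sub: "range (to_ac :: 'l \<Rightarrow> _) \<subseteq> {x :: 'l alg_closure. x ^ ?Q = x}"
    by (auto simp flip: to_ac_power simp: power_card_UNIV_eq_self)
  have "card (range (to_ac :: 'l \<Rightarrow> 'l alg_closure)) = ?Q"
    by (rule card_image[OF inj_to_ac])
  moreover have "card {x :: 'l alg_closure. x ^ ?Q = x} \<le> ?Q"
    by (rule card_power_fixed_points_le[OF card_UNIV_field_ge_2])
  ultimately show "card (range (to_ac :: 'l \<Rightarrow> _)) = card {x :: 'l alg_closure. x ^ ?Q = x}"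
    using card_mono[OF fin sub] by linarith
qed

lemma coeff_vanish_from_iff: "(\<forall>i\<ge>n. coeff g i = 0) \<longleftrightarrow> g = 0 \<or> degree g < n"
proof
  assume vanish: "\<forall>i\<ge>n. coeff g i = 0"
  show "g = 0 \<or> degree g < n"
  proof (rule ccontr)
    assume "\<not> (g = 0 \<or> degree g < n)"
    then have "g \<noteq> 0" "coeff g (degree g) = 0"
      using vanish by auto
    then show False by simp
  qed
qed (auto intro: coeff_eq_0)

lemma card_polys_coeff_vanish_from:
  "card {g :: 'a::{finite,zero} poly. \<forall>i\<ge>n. coeff g i = 0} = CARD('a) ^ n"
proof (induction n)
  case 0
  have "{g :: 'a poly. \<forall>i\<ge>0. coeff g i = 0} = {0}"
    by (auto intro: poly_eqI)
  then show ?case by simp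
next
  case (Suc n)
  have "{g :: 'a poly. \<forall>i\<ge>Suc n. coeff g i = 0}
      = (\<lambda>(c, g). pCons c g) ` (UNIV \<times> {g. \<forall>i\<ge>n. coeff g i = 0})"
  proof (intro equalityI subsetI)
    fix g :: "'a poly"
    assume "g \<in> {g. \<forall>i\<ge>Suc n. coeff g i = 0}"
    then show "g \<in> (\<lambda>(c, g). pCons c g) ` (UNIV \<times> {g. \<forall>i\<ge>n. coeff g i = 0})"
      by (cases g) (auto simp: image_iff)
  next
    fix g :: "'a poly"
    assume "g \<in> (\<lambda>(c, g). pCons c g) ` (UNIV \<times> {g. \<forall>i\<ge>n. coeff g i = 0})"
    then show "g \<in> {g. \<forall>i\<ge>Suc n. coeff g i = 0}"
      by (auto simp: coeff_pCons split: nat.split)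
  qed
  moreover have "inj_on (\<lambda>(c, g). pCons c g) (UNIV \<times> {g :: 'a poly. \<forall>i\<ge>n. coeff g i = 0})"
    by (auto simp: inj_on_def)
  ultimately show ?case
    by (simp add: card_image card_cartesian_product Suc)
qed

lemma range_mod_poly:
  fixes f :: "'a::field poly"
  assumes "f \<noteq> 0"
  shows "range (\<lambda>g. g mod f) = {g. \<forall>i\<ge>degree f. coeff g i = 0}"
proof (intro equalityI subsetI)
  fix r :: "'a poly" assume "r \<in> range (\<lambda>g. g mod f)"
  then show "r \<in> {g. \<forall>i\<ge>degree f. coeff g i = 0}"
    using degree_mod_less'[OF assms] by (auto simp: coeff_vanish_from_iff)
next
  fix r :: "'a poly" assume "r \<in> {g. \<forall>i\<ge>degree f. coeff g i = 0}"
  then have "r mod f = r"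
    by (auto simp: coeff_vanish_from_iff mod_poly_less)
  then show "r \<in> range (\<lambda>g. g mod f)"
    by (metis rangeI)
qed

lemma card_quotient_kernel:
  "card (UNIV // {(x, y). K x = K y}) = card (range K)"
proof -
  have "{y. K x = K y} = K -` {K x}" for x
    by auto
  then have "UNIV // {(x, y). K x = K y} = (\<lambda>v. K -` {v}) ` range K"
    by (auto simp: quotient_def)
  moreover have "inj_on (\<lambda>v. K -` {v}) (range K)"
    by (auto simp: inj_on_def)
  ultimately show ?thesis
    by (simp add: card_image)
qed

lemma quot_card_Ybar:
  fixes h f :: "'a::{finite,field} poly"
  assumes "f \<noteq> 0"
  shows "quot_card h f Ybar = CARD('a) ^ degree f"
proof -
  have "(\<exists>c. hsub x y = hmul h f Ybar c) \<longleftrightarrow> fst x mod f = fst y mod f" for x y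
  proof
    assume "\<exists>c. hsub x y = hmul h f Ybar c"
    then have "f dvd fst x - fst y"
      by (auto simp: hsub_def hmul_def Ybar_def)
    then show "fst x mod f = fst y mod f"
      by (simp add: mod_eq_dvd_iff)
  next
    assume "fst x mod f = fst y mod f"
    then obtain k where k: "fst x - fst y = k * f"
      by (metis mod_eq_dvd_iff dvdE mult.commute)
    then have "hsub x y = hmul h f Ybar (snd x - snd y + k * h, k)"
      by (simp add: hsub_def hmul_def Ybar_def)
    then show "\<exists>c. hsub x y = hmul h f Ybar c" ..
  qed
  then have "{(x, y). \<exists>c. hsub x y = hmul h f Ybar c}
      = {(x :: 'a poly \<times> 'a poly, y). fst x mod f = fst y mod f}"
    by auto
  then have "quot_card h f Ybar = card (UNIV // {(x :: 'a poly \<times> 'a poly, y). fst x mod f = fst y mod f})"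
    by (simp add: quot_card_def)
  also have "\<dots> = card (range (\<lambda>x :: 'a poly \<times> 'a poly. fst x mod f))"
    by (rule card_quotient_kernel)
  also have "range (\<lambda>x :: 'a poly \<times> 'a poly. fst x mod f) = range (\<lambda>g. g mod f)"
    by (auto simp: image_iff)
  finally show ?thesis
    by (simp add: range_mod_poly[OF assms] card_polys_coeff_vanish_from)
qed

lemma min_degree_kernel_elem_dvd:
  fixes e :: "'a::field poly \<Rightarrow> 'b::comm_ring_1"
  assumes "\<And>a b. e (a + b) = e a + e b" "\<And>a b. e (a * b) = e a * e b"
    and "r \<noteq> 0" "e r = 0" "\<And>s. s \<noteq> 0 \<Longrightarrow> e s = 0 \<Longrightarrow> degree r \<le> degree s"
    and "e g = 0"
  shows "r dvd g"
proof -
  have "e g = e (g div r * r) + e (g mod r)"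
    by (metis assms(1) div_mult_mod_eq)
  then have "e (g mod r) = 0"
    using assms(2,4,6) by simp
  then have "g mod r = 0"
    using assms(5) degree_mod_less'[OF assms(3)] by (meson not_le)
  then show ?thesis by (simp add: mod_eq_0_iff_dvd)
qed

lemma irreducible_dvd_if_hom_eq_0:
  fixes e :: "'a::field poly \<Rightarrow> 'b::comm_ring_1"
  assumes "\<And>a b. e (a + b) = e a + e b" "\<And>a b. e (a * b) = e a * e b" "e 1 \<noteq> 0"
    and "irreducible p" "e p = 0" "e g = 0"
  shows "p dvd g"
proof -
  have "p \<noteq> 0" using assms(4) by auto
  then obtain r where r: "r \<noteq> 0" "e r = 0" and min: "\<And>s. s \<noteq> 0 \<Longrightarrow> e s = 0 \<Longrightarrow> degree r \<le> degree s"
    using ex_has_least_nat[of "\<lambda>r. r \<noteq> 0 \<and> e r = 0" p degree] assms(5) by blast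
  have r_dvd: "r dvd s" if "e s = 0" for s
    by (rule min_degree_kernel_elem_dvd[OF assms(1,2) r min that])
  obtain s where s: "p = r * s"
    using r_dvd[OF assms(5)] by (auto elim: dvdE)
  have "\<not> is_unit r"
  proof
    assume "is_unit r"
    then have "r dvd 1" by simp
    then show False
      using r_dvd assms(3) by (metis assms(2) dvdE mult_zero_left r(2))
  qed
  then have "is_unit s"
    using irreducibleD[OF assms(4) s] by blast
  then have "p dvd r"
    using s by (simp add: mult_unit_dvd_iff')
  then show ?thesis
    using r_dvd[OF assms(6)] by (rule dvd_trans)
qed

lemma map_poly_to_ac_inject: "map_poly to_ac P = map_poly to_ac R \<longleftrightarrow> P = R"
  by (metis coeff_map_poly poly_eqI to_ac_0 to_ac_eq_iff)

lemma map_poly_to_ac_add: "map_poly to_ac (P + R) = map_poly to_ac P + map_poly to_ac R"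
  by (rule poly_eqI) (simp add: coeff_map_poly)

lemma map_poly_to_ac_of_ac:
  assumes "\<And>k. coeff P k \<in> range to_ac"
  shows "map_poly to_ac (map_poly of_ac P) = P"
  by (rule poly_eqI) (simp add: coeff_map_poly to_ac_of_ac assms)

lemma eq_monom_if_coeff_below_degree_0:
  assumes "\<forall>i<degree P. coeff P i = 0"
  shows "P = monom (lead_coeff P) (degree P)"
  by (rule poly_eqI) (use assms in \<open>auto simp: coeff_monom coeff_eq_0 linorder_neq_iff\<close>)

lemma conj_coeff_in_range_to_ac:
  fixes u :: "'l::{finite,field} alg_closure" and b c :: 'l
  assumes "u ^ (CARD('l) - 1) = to_ac b" "b \<noteq> 0" "c * b ^ N = b * c"
  shows "u * to_ac c * inverse u ^ N \<in> range to_ac"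
proof (cases "c = 0")
  case False
  let ?Q = "CARD('l)"
  have "?Q = Suc (?Q - 1)"
    using card_UNIV_field_ge_2[where 'a = 'l] by simp
  then have uQ: "u ^ ?Q = u * to_ac b"
    by (metis assms(1) power_Suc)
  have bN: "b ^ N = b"
    using assms(3) False by (simp add: mult.commute)
  have "(u * to_ac c * inverse u ^ N) ^ ?Q = u ^ ?Q * to_ac (c ^ ?Q) * inverse (u ^ ?Q) ^ N"
    by (simp add: power_mult_distrib power_inverse flip: power_mult) (simp add: mult.commute)
  also have "\<dots> = u * to_ac c * inverse u ^ N * (to_ac b * inverse (to_ac (b ^ N)))"
    by (simp add: uQ power_card_UNIV_eq_self power_mult_distrib power_inverse)
  also have "to_ac b * inverse (to_ac (b ^ N)) = 1"
    using bN assms(2) by simp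
  finally show ?thesis
    by (simp add: range_to_ac_eq_power_fixed_points)
qed (simp add: image_iff)

section \<open>Rank-one Drinfeld modules\<close>

locale rank1_drinfeld_module =
  fixes h f :: "'a::{finite,field} poly" and \<iota> :: "'a \<Rightarrow> 'l::{finite,field}" and \<theta> :: 'l
    and \<phi> :: "'a poly \<times> 'a poly \<Rightarrow> 'l poly"
  assumes is_drinfeld: "is_drinfeld_rank1 h f \<iota> \<theta> \<phi>"
begin

abbreviation \<gamma> :: "'a poly \<Rightarrow> 'l" where "\<gamma> g \<equiv> gamma_map \<iota> \<theta> (g, 0)"

lemma card_pos: "CARD('a) > 0"
  using card_UNIV_field_ge_2[where 'a = 'a] by simp

lemma phi_hadd: "\<phi> (hadd a b) = \<phi> a + \<phi> b"
  using is_drinfeld unfolding is_drinfeld_rank1_def by blast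

lemma phi_hmul: "\<phi> (hmul h f a b) = ore_mult CARD('a) (\<phi> a) (\<phi> b)"
  using is_drinfeld unfolding is_drinfeld_rank1_def by blast

lemma phi_hone: "\<phi> hone = 1"
  using is_drinfeld unfolding is_drinfeld_rank1_def by blast

lemma phi_const: "\<phi> ([:c:], 0) = [:\<iota> c:]"
  using is_drinfeld unfolding is_drinfeld_rank1_def by blast

lemma coeff_phi_0: "coeff (\<phi> a) 0 = gamma_map \<iota> \<theta> a"
  using is_drinfeld unfolding is_drinfeld_rank1_def by blast

lemma phi_nonconstant: "\<exists>a. degree (\<phi> a) > 0"
  using is_drinfeld unfolding is_drinfeld_rank1_def by blast

lemma card_quot_phi: "a \<noteq> (0, 0) \<Longrightarrow> CARD('a) ^ degree (\<phi> a) = quot_card h f a"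
  using is_drinfeld unfolding is_drinfeld_rank1_def by blast

lemma phi_commute: "ore_mult CARD('a) (\<phi> a) (\<phi> b) = ore_mult CARD('a) (\<phi> b) (\<phi> a)"
proof -
  have "hmul h f a b = hmul h f b a"
    by (simp add: hmul_def algebra_simps)
  then show ?thesis
    by (simp flip: phi_hmul)
qed

lemma gamma_add: "\<gamma> (a + b) = \<gamma> a + \<gamma> b"
  using phi_hadd[of "(a, 0)" "(b, 0)"] by (simp add: hadd_def flip: coeff_phi_0)

lemma gamma_mult: "\<gamma> (a * b) = \<gamma> a * \<gamma> b"
  using phi_hmul[of "(a, 0)" "(b, 0)"]
  by (simp add: hmul_def coeff_ore_mult_0[OF card_pos] flip: coeff_phi_0)

lemma gamma_one: "\<gamma> 1 = 1"
  using phi_hone by (simp add: hone_def flip: coeff_phi_0)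

lemma gamma_diff: "\<gamma> (a - b) = \<gamma> a - \<gamma> b"
  using gamma_add[of "a - b" b] by simp

lemma dvd_if_gamma_eq_0:
  assumes "irreducible p" "\<gamma> p = 0" "\<gamma> g = 0"
  shows "p dvd g"
  by (rule irreducible_dvd_if_hom_eq_0[OF gamma_add gamma_mult _ assms]) (simp add: gamma_one)

lemma gamma_power_fixed_if_lowest_coeff:
  assumes "\<forall>i<k. coeff (\<phi> a) i = 0" "coeff (\<phi> a) k \<noteq> 0"
  shows "\<gamma> g ^ CARD('a) ^ k = \<gamma> g"
  using ore_commute_lowest_coeff[OF card_pos assms phi_commute] by (simp add: coeff_phi_0)

lemma card_residues_le_if_gamma_power_fixed:
  assumes "irreducible p" "\<gamma> p = 0" "N \<ge> 2" "\<And>g. \<gamma> g ^ N = \<gamma> g"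
  shows "CARD('a) ^ degree p \<le> N"
proof -
  let ?S = "{g :: 'a poly. \<forall>i\<ge>degree p. coeff g i = 0}"
  have "inj_on \<gamma> ?S"
  proof (rule inj_onI)
    fix g1 g2 assume "g1 \<in> ?S" "g2 \<in> ?S" "\<gamma> g1 = \<gamma> g2"
    then have "p dvd g1 - g2" "\<forall>i\<ge>degree p. coeff (g1 - g2) i = 0"
      using dvd_if_gamma_eq_0[OF assms(1,2)] by (simp_all add: gamma_diff)
    then have "p dvd g1 - g2" "g1 - g2 = 0 \<or> degree (g1 - g2) < degree p"
      by (simp_all only: coeff_vanish_from_iff)
    then show "g1 = g2"
      using dvd_imp_degree_le by force
  qed
  then have "CARD('a) ^ degree p = card (\<gamma> ` ?S)"
    by (simp add: card_image card_polys_coeff_vanish_from)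
  also have "\<dots> \<le> card {x :: 'l. x ^ N = x}"
    by (rule card_mono[OF finite_power_fixed_points[OF assms(3)]]) (use assms(4) in blast)
  also have "\<dots> \<le> N"
    by (rule card_power_fixed_points_le[OF assms(3)])
  finally show ?thesis .
qed

lemma coeff_phi_irreducible_below_degree:
  assumes "irreducible p" "\<gamma> p = 0" "i < degree p"
  shows "coeff (\<phi> (p, 0)) i = 0"
  using assms(3)
proof (induction i rule: less_induct)
  case (less k)
  show ?case
  proof (rule ccontr)
    assume nonzero: "coeff (\<phi> (p, 0)) k \<noteq> 0"
    have "k \<noteq> 0"
    proof
      assume "k = 0"
      with nonzero assms(2) show False by (simp add: coeff_phi_0)
    qed
    then have "CARD('a) ^ k \<ge> 2"
      using card_UNIV_field_ge_2[where 'a = 'a] self_le_power[of "CARD('a)" k] by linarith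
    then have "CARD('a) ^ degree p \<le> CARD('a) ^ k"
      using gamma_power_fixed_if_lowest_coeff less.IH less.prems nonzero
      by (intro card_residues_le_if_gamma_power_fixed[OF assms(1,2)]) auto
    then show False
      using less.prems card_UNIV_field_ge_2[where 'a = 'a] by (simp add: power_le_imp_le_exp)
  qed
qed

lemma coeff_phi_power_below:
  assumes "irreducible p" "\<gamma> p = 0" "i < j * degree p"
  shows "coeff (\<phi> (p ^ j, 0)) i = 0"
  using assms(3)
proof (induction j arbitrary: i)
  case (Suc j)
  have "\<phi> (p ^ Suc j, 0) = ore_mult CARD('a) (\<phi> (p, 0)) (\<phi> (p ^ j, 0))"
    by (simp add: hmul_def flip: phi_hmul)
  moreover have "\<forall>i<degree p. coeff (\<phi> (p, 0)) i = 0"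
    using coeff_phi_irreducible_below_degree[OF assms(1,2)] by blast
  moreover have "\<forall>i<j * degree p. coeff (\<phi> (p ^ j, 0)) i = 0"
    using Suc.IH by blast
  ultimately show ?case
    using coeff_ore_mult_eq_0_below[OF card_pos] Suc.prems by simp
qed simp

lemma coeff_phi_smult_power_below:
  assumes "irreducible p" "\<gamma> p = 0" "i < m * degree p"
  shows "coeff (\<phi> (smult \<alpha> (p ^ m), 0)) i = 0"
proof -
  have "\<phi> (smult \<alpha> (p ^ m), 0) = ore_mult CARD('a) (\<phi> ([:\<alpha>:], 0)) (\<phi> (p ^ m, 0))"
    by (simp add: hmul_def flip: phi_hmul)
  moreover have "\<forall>i<m * degree p. coeff (\<phi> (p ^ m, 0)) i = 0"
    using coeff_phi_power_below[OF assms(1,2)] by blast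
  ultimately show ?thesis
    using coeff_ore_mult_eq_0_below[OF card_pos, of 0] assms(3) by simp
qed

lemma degree_phi_Ybar:
  assumes "f \<noteq> 0"
  shows "degree (\<phi> Ybar) = degree f"
proof -
  have "CARD('a) ^ degree (\<phi> Ybar) = CARD('a) ^ degree f"
    using card_quot_phi[of Ybar] quot_card_Ybar[OF assms, of h] by (simp add: Ybar_def)
  then show ?thesis
    using card_UNIV_field_ge_2[where 'a = 'a] by (simp add: power_inject_exp)
qed

lemma coeff_phi_Ybar_below:
  assumes "irreducible p" "\<gamma> p = 0" "\<not> p dvd h" "\<And>i. i < n \<Longrightarrow> coeff (\<phi> (f, 0)) i = 0"
    and "i < n"
  shows "coeff (\<phi> Ybar) i = 0"
  using assms(5)
proof (induction i rule: less_induct)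
  case (less k)
  \<comment> \<open>Y (Y + h) = f in A_H\<close>
  have "\<phi> (f, 0) = ore_mult CARD('a) (\<phi> Ybar) (\<phi> (h, 1))"
    by (simp add: hmul_def Ybar_def flip: phi_hmul)
  then have "coeff (\<phi> (f, 0)) k = coeff (\<phi> Ybar) k * \<gamma> h ^ CARD('a) ^ k"
    using less.IH less.prems
    by (simp add: coeff_ore_mult_lowest_left[OF card_pos] coeff_phi_0 gamma_map_def)
  moreover have "\<gamma> h \<noteq> 0"
    using dvd_if_gamma_eq_0[OF assms(1,2)] assms(3) by blast
  ultimately show ?case
    using assms(4) less.prems by simp
qed

lemma phi_Ybar_eq_monom:
  assumes "irreducible p" "\<gamma> p = 0" "\<not> p dvd h" "\<alpha> \<noteq> 0" "f = smult \<alpha> (p ^ m)"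
  shows "\<phi> Ybar = monom (lead_coeff (\<phi> Ybar)) (degree f)"
proof -
  have "p \<noteq> 0"
    using assms(1) by auto
  then have "degree f = m * degree p" "f \<noteq> 0"
    using assms(4,5) by (simp_all add: degree_power_eq)
  moreover have "\<forall>i<m * degree p. coeff (\<phi> Ybar) i = 0"
    using coeff_phi_Ybar_below[OF assms(1-3)] coeff_phi_smult_power_below[OF assms(1,2)] assms(5)
    by blast
  ultimately show ?thesis
    using eq_monom_if_coeff_below_degree_0[of "\<phi> Ybar"] by (simp add: degree_phi_Ybar)
qed

lemma coeff_phi_commute_monom:
  assumes "\<phi> Ybar = monom b d" "CARD('l) = CARD('a) ^ d"
  shows "coeff (\<phi> a) k * b ^ CARD('a) ^ k = b * coeff (\<phi> a) k"
proof -
  have "coeff (\<phi> a) k ^ CARD('a) ^ d = coeff (\<phi> a) k"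
    using power_card_UNIV_eq_self assms(2) by metis
  then show ?thesis
    using ore_commute_monom_coeff[OF card_pos, of "\<phi> a" b d k] phi_commute[of a Ybar] assms(1)
    by simp
qed

lemma coeff_conj_phi_in_range_to_ac:
  assumes "\<phi> Ybar = monom b d" "b \<noteq> 0" "CARD('l) = CARD('a) ^ d"
    and "u ^ (CARD('l) - 1) = to_ac b"
  shows "coeff (ore_conj CARD('a) u (map_poly to_ac (\<phi> a))) k \<in> range to_ac"
  using conj_coeff_in_range_to_ac[OF assms(4,2) coeff_phi_commute_monom[OF assms(1,3)]]
  by (simp add: coeff_ore_conj[OF card_pos] coeff_map_poly)

text \<open>The result is only meaningful when all coefficients lie in the image of L, since of_ac is
  arbitrary elsewhere; hence the hypothesis conj_in_range below.\<close>

definition conjugate :: "'l alg_closure \<Rightarrow> 'a poly \<times> 'a poly \<Rightarrow> 'l poly" where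
  "conjugate u a = map_poly of_ac (ore_conj CARD('a) u (map_poly to_ac (\<phi> a)))"

context
  fixes u :: "'l alg_closure"
  assumes u_nonzero: "u \<noteq> 0"
    and conj_in_range: "\<And>a k. coeff (ore_conj CARD('a) u (map_poly to_ac (\<phi> a))) k \<in> range to_ac"
begin

lemma map_poly_to_ac_conjugate:
  "map_poly to_ac (conjugate u a) = ore_conj CARD('a) u (map_poly to_ac (\<phi> a))"
  unfolding conjugate_def by (rule map_poly_to_ac_of_ac[OF conj_in_range])

lemma conjugate_eqI:
  assumes "ore_conj CARD('a) u (map_poly to_ac (\<phi> a)) = map_poly to_ac P"
  shows "conjugate u a = P"
proof -
  have "map_poly to_ac (conjugate u a) = map_poly to_ac P"
    using assms by (simp add: map_poly_to_ac_conjugate)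
  then show ?thesis by (simp only: map_poly_to_ac_inject)
qed

lemma degree_conjugate: "degree (conjugate u a) = degree (\<phi> a)"
proof -
  have "degree (conjugate u a) = degree (map_poly to_ac (conjugate u a))"
    by (simp add: degree_map_poly)
  also have "\<dots> = degree (\<phi> a)"
    by (simp add: map_poly_to_ac_conjugate degree_ore_conj[OF card_pos u_nonzero] degree_map_poly)
  finally show ?thesis .
qed

lemma coeff_conjugate_0: "coeff (conjugate u a) 0 = coeff (\<phi> a) 0"
proof -
  have "to_ac (coeff (conjugate u a) 0) = coeff (map_poly to_ac (conjugate u a)) 0"
    by (simp add: coeff_map_poly)
  also have "\<dots> = to_ac (coeff (\<phi> a) 0)"
    by (simp add: map_poly_to_ac_conjugate coeff_ore_conj_0[OF card_pos u_nonzero] coeff_map_poly)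
  finally show ?thesis by simp
qed

lemma conjugate_is_drinfeld_rank1: "is_drinfeld_rank1 h f \<iota> \<theta> (conjugate u)"
proof -
  have "conjugate u (hadd a b) = conjugate u a + conjugate u b" for a b
    by (rule conjugate_eqI)
      (simp add: phi_hadd map_poly_to_ac_add ore_conj_add[OF card_pos] map_poly_to_ac_conjugate)
  moreover have "conjugate u (hmul h f a b) = ore_mult CARD('a) (conjugate u a) (conjugate u b)" for a b
    by (rule conjugate_eqI)
      (simp add: phi_hmul map_poly_to_ac_ore_mult[OF card_pos] ore_conj_ore_mult[OF card_pos u_nonzero]
        map_poly_to_ac_conjugate)
  moreover have "conjugate u hone = 1"
    by (rule conjugate_eqI) (simp add: phi_hone ore_conj_1[OF card_pos u_nonzero])
  moreover have "conjugate u ([:c:], 0) = [:\<iota> c:]" for c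
    by (rule conjugate_eqI) (simp add: phi_const map_poly_pCons ore_conj_const[OF card_pos u_nonzero])
  ultimately show ?thesis
    using coeff_phi_0 phi_nonconstant card_quot_phi
    unfolding is_drinfeld_rank1_def degree_conjugate coeff_conjugate_0 by blast
qed

lemma Lbar_isomorphic_conjugate: "Lbar_isomorphic CARD('a) \<phi> (conjugate u)"
  unfolding Lbar_isomorphic_def
  using u_nonzero map_poly_to_ac_conjugate by (auto simp: ore_conj_def)

lemma conjugate_Ybar:
  assumes "\<phi> Ybar = monom b d" "CARD('l) = CARD('a) ^ d" "u ^ (CARD('l) - 1) = to_ac b"
  shows "conjugate u Ybar = monom 1 d"
proof (rule conjugate_eqI, rule poly_eqI)
  fix k
  have "u * u ^ (CARD('l) - 1) = u ^ CARD('l)"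
    using card_UNIV_field_ge_2[where 'a = 'l] by (simp flip: power_Suc)
  then have "u * to_ac b * inverse u ^ CARD('a) ^ d = 1"
    using assms(2,3) u_nonzero by (simp add: power_inverse)
  then show "coeff (ore_conj CARD('a) u (map_poly to_ac (\<phi> Ybar))) k = coeff (map_poly to_ac (monom 1 d)) k"
    by (auto simp: assms(1) coeff_ore_conj[OF card_pos] coeff_map_poly)
qed

end

end

theorem lemma6:
  fixes p h f :: "'a::{finite,field} poly"
    and \<alpha> :: 'a and d m :: nat
    and \<iota> :: "'a \<Rightarrow> 'l::{finite,field}" and \<theta> :: 'l
  assumes "d \<ge> 5" and "odd d" and "m > 0" and "m dvd d"
    and "lead_coeff p = 1" and "irreducible p" and "degree p = d div m"
    and "\<alpha> \<noteq> 0" and "f = smult \<alpha> (p ^ m)"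
    and "h \<noteq> 0" and "degree h \<le> (d - 1) div 2" and "\<not> p dvd h"
    and "nonsingular_curve h f"
    and "(card (UNIV :: 'l set)) = (card (UNIV :: 'a set)) ^ d"
    and "\<forall>x y. \<iota> (x + y) = \<iota> x + \<iota> y" and "\<forall>x y. \<iota> (x * y) = \<iota> x * \<iota> y" and "\<iota> 1 = 1"
    and "poly (map_poly \<iota> p) \<theta> = 0"
    and "is_drinfeld_rank1 h f \<iota> \<theta> \<phi>"
  shows "\<exists>\<psi>. is_drinfeld_rank1 h f \<iota> \<theta> \<psi> \<and> \<psi> Ybar = monom 1 d \<and>
             Lbar_isomorphic (card (UNIV :: 'a set)) \<phi> \<psi>"
proof -
  interpret rank1_drinfeld_module h f \<iota> \<theta> \<phi>
    by unfold_locales (fact assms(19))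
  have gamma_p: "\<gamma> p = 0"
    using assms(18) by (simp add: gamma_map_def)
  have "p \<noteq> 0"
    using assms(5) by auto
  then have "degree f = d"
    using assms(4,7,8,9) by (simp add: degree_power_eq)
  then have Y: "\<phi> Ybar = monom (lead_coeff (\<phi> Ybar)) d" and "f \<noteq> 0"
    using phi_Ybar_eq_monom[OF assms(6) gamma_p assms(12,8,9)] assms(1) by auto
  then have b: "lead_coeff (\<phi> Ybar) \<noteq> 0"
    using degree_phi_Ybar \<open>degree f = d\<close> assms(1) by auto
  have "CARD('l) - 1 > 0"
    using card_UNIV_field_ge_2[where 'a = 'l] by simp
  then obtain u :: "'l alg_closure" where u: "u ^ (CARD('l) - 1) = to_ac (lead_coeff (\<phi> Ybar))"
    using nth_root_exists by blast
  then have "u \<noteq> 0"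
    using b \<open>CARD('l) - 1 > 0\<close> by (auto simp: zero_power)
  note conj = \<open>u \<noteq> 0\<close> coeff_conj_phi_in_range_to_ac[OF Y b assms(14) u]
  show ?thesis
    using conjugate_is_drinfeld_rank1[OF conj] conjugate_Ybar[OF conj Y assms(14) u]
      Lbar_isomorphic_conjugate[OF conj] by blast
qed

end
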